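(* Let $H=(S_1,\dots,S_\ell)$ be a partial route. For every $H'\subseteq H$ and every $\bar x\in\mathcal{X}$, $$\bar x(H')-|V_+(H')|+1\ \ge\ W_{OF}(\bar x;H)-1.$$
   Context: $G=(V,E)$ complete undirected graph, $V=\{0\}\cup V_+$ ($V_+$ customers); capacity $C>0$; scenario demands $d^\xi\in\mathbb{Q}^{V_+}_{\ge0}$ and probabilities $p_\xi\ge0$ summing to $1$, $\bar d=\sum_\xi p_\xi d^\xi$. $f(S)=\sum_{i\in S}f(i)$; $E(S)$: edges with both ends in $S$; $E(S,T)$: edges with one end in $S$ and the other in $T$ ($S,T$ disjoint); $\delta(S)$: edges with exactly one end in $S$. $\mathcal{X}$ is one of $\mathcal{X}_{\mathrm{sub}}=\{x\in[0,2]^E: x(\delta(v))=2\ \forall v\in V_+,\ x(E(S))\le|S|-1\ \forall\emptyset\ne S\subseteq V_+\}$ or $\mathcal{X}_{\mathrm{cvrp}}=\mathcal{X}_{\mathrm{sub}}\cap\{x:x(\delta(0))=2k,\ x(E(S))\le|S|-\lceil\bar d(S)/C\rceil\}$. A partial route $H=(S_1,\dots,S_\ell)$ is a tuple of pairwise disjoint nonempty subsets of $V_+$ with no index $i$ such that both $S_i$ and $S_{i+1}$ have more than one element; $V_+(H)=\bigcup_iS_i$; $H'\subseteq H$ means $H'=(S_i,\dots,S_j)$ for some $1\le i\le j\le\ell$. $x(H)=\sum_{i\in[\ell]}x(E(S_i))+\sum_{i\in[\ell-1]}x(E(S_i,S_{i+1}))$, and $W_{OF}(x;H)=1+(x(H)-|V_+(H)|+1)+\sum_{i\in\{2,\ell-1\}\cap[\ell]}(x(E(S_i))-|S_i|+1)$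 (the index set $\{2,\ell-1\}\cap[\ell]$ is a set, so a repeated index is counted once). *)

theory Defs
  imports Complex_Main
begin

text \<open>Complete undirected graph on V = {depot} \<union> Vp; edges are 2-element vertex sets.
  An edge vector x assigns a real to each edge (values off the edge set are irrelevant).\<close>

definition edges :: "'a set \<Rightarrow> 'a set set" where
  "edges V = {{u, v} | u v. u \<in> V \<and> v \<in> V \<and> u \<noteq> v}"

definition Ein :: "'a set \<Rightarrow> 'a set \<Rightarrow> 'a set set" where
  "Ein V S = {e \<in> edges V. e \<subseteq> S}"

definition Ebetween :: "'a set \<Rightarrow> 'a set \<Rightarrow> 'a set \<Rightarrow> 'a set set" where
  "Ebetween V S T = {e \<in> edges V. \<exists>u v. e = {u, v} \<and> u \<in> S \<and> v \<in> T}"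

definition cut :: "'a set \<Rightarrow> 'a set \<Rightarrow> 'a set set" where
  "cut V S = {e \<in> edges V. card (e \<inter> S) = 1}"

definition xs :: "('a set \<Rightarrow> real) \<Rightarrow> 'a set set \<Rightarrow> real" where
  "xs x F = (\<Sum>e\<in>F. x e)"

definition Xsub :: "'a \<Rightarrow> 'a set \<Rightarrow> ('a set \<Rightarrow> real) set" where
  "Xsub depot Vp = {x. (\<forall>e\<in>edges (insert depot Vp). 0 \<le> x e \<and> x e \<le> 2)
     \<and> (\<forall>v\<in>Vp. xs x (cut (insert depot Vp) {v}) = 2)
     \<and> (\<forall>S. S \<noteq> {} \<and> S \<subseteq> Vp \<longrightarrow> xs x (Ein (insert depot Vp) S) \<le> real (card S) - 1)}"

definition dbar :: "'b set \<Rightarrow> ('b \<Rightarrow> real) \<Rightarrow> ('b \<Rightarrow> 'a \<Rightarrow> real) \<Rightarrow> 'a \<Rightarrow> real" where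
  "dbar Xi p d i = (\<Sum>\<xi>\<in>Xi. p \<xi> * d \<xi> i)"

definition Xcvrp :: "'a \<Rightarrow> 'a set \<Rightarrow> nat \<Rightarrow> real \<Rightarrow> ('a \<Rightarrow> real) \<Rightarrow> ('a set \<Rightarrow> real) set" where
  "Xcvrp depot Vp k C db = Xsub depot Vp \<inter> {x.
      xs x (cut (insert depot Vp) {depot}) = 2 * real k
    \<and> (\<forall>S. S \<noteq> {} \<and> S \<subseteq> Vp \<longrightarrow>
          xs x (Ein (insert depot Vp) S) \<le> real (card S) - of_int \<lceil>(\<Sum>i\<in>S. db i) / C\<rceil>)}"

definition partial_route :: "'a set \<Rightarrow> 'a set list \<Rightarrow> bool" where
  "partial_route Vp H \<longleftrightarrow>
     (\<forall>i<length H. H ! i \<noteq> {} \<and> H ! i \<subseteq> Vp)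
   \<and> (\<forall>i<length H. \<forall>j<length H. i \<noteq> j \<longrightarrow> H ! i \<inter> H ! j = {})
   \<and> \<not> (\<exists>i. Suc i < length H \<and> card (H ! i) > 1 \<and> card (H ! Suc i) > 1)"

text \<open>H' \<subseteq> H: H' = (S_i, ..., S_j), 1 \<le> i \<le> j \<le> l (here 0-indexed i \<le> j < length H).\<close>
definition subroute :: "'a set list \<Rightarrow> 'a set list \<Rightarrow> bool" where
  "subroute H' H \<longleftrightarrow> (\<exists>i j. i \<le> j \<and> j < length H \<and> H' = drop i (take (Suc j) H))"

definition Vplus :: "'a set list \<Rightarrow> 'a set" where
  "Vplus H = \<Union> (set H)"

definition xroute :: "'a set \<Rightarrow> ('a set \<Rightarrow> real) \<Rightarrow> 'a set list \<Rightarrow> real" where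
  "xroute V x H = (\<Sum>i<length H. xs x (Ein V (H ! i)))
      + (\<Sum>i<length H - 1. xs x (Ebetween V (H ! i) (H ! Suc i)))"

text \<open>W_OF with 1-indexed positions: the extra sum ranges over the set {2, l-1} \<inter> {1..l}.\<close>
definition W_OF :: "'a set \<Rightarrow> ('a set \<Rightarrow> real) \<Rightarrow> 'a set list \<Rightarrow> real" where
  "W_OF V x H = 1 + (xroute V x H - real (card (Vplus H)) + 1)
     + (\<Sum>i\<in>{2, length H - 1} \<inter> {1..length H}.
          xs x (Ein V (H ! (i - 1))) - real (card (H ! (i - 1))) + 1)"

end

theory Submission
  imports Defs
begin

(* Split H = A @ H' @ B. The excess x(K) - |V+(K)| of a block list K is at most -1, by the
   subtour constraint on V+(K). Hence A, together with the edges into the first block S of H',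
   contributes at most minus the slack x(E(S)) - |S| + 1 of S; if A has at least two blocks it
   contributes at most 0, since either S is a singleton (slack 0) or the block before S is a
   singleton {v}, whose degree constraint x(delta(v)) = 2 pays for both route edges at v.
   Symmetrically for B. The slack terms of W_OF sit at the second and penultimate positions of
   H: the first block of H' after a one-block prefix and its last block before a one-block
   suffix. *)

lemma finite_edges: "finite V \<Longrightarrow> finite (edges V)"
  by (rule finite_subset[of _ "Pow V"]) (auto simp: edges_def)

lemma xs_empty [simp]: "xs x {} = 0"
  by (simp add: xs_def)

lemma Ein_singleton [simp]: "Ein V {v} = {}"
  by (auto simp: Ein_def edges_def)

lemma Ein_empty [simp]: "Ein V {} = {}"
  by (auto simp: Ein_def edges_def)

lemma Ebetween_commute: "Ebetween V S T = Ebetween V T S"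
  by (auto simp: Ebetween_def insert_commute)

fun route_weight :: "'a set \<Rightarrow> ('a set \<Rightarrow> real) \<Rightarrow> 'a set list \<Rightarrow> real" where
  "route_weight V x [] = 0"
| "route_weight V x [S] = xs x (Ein V S)"
| "route_weight V x (S # T # K) = xs x (Ein V S) + xs x (Ebetween V S T) + route_weight V x (T # K)"

lemma xroute_eq_route_weight: "xroute V x K = route_weight V x K"
  by (induction V x K rule: route_weight.induct)
    (simp_all add: xroute_def sum.lessThan_Suc_shift del: sum.lessThan_Suc)

lemma route_weight_append:
  "A \<noteq> [] \<Longrightarrow> K \<noteq> [] \<Longrightarrow>
   route_weight V x (A @ K) = route_weight V x A + xs x (Ebetween V (last A) (hd K)) + route_weight V x K"
  by (induction A rule: induct_list012) (auto simp: neq_Nil_conv)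

lemma route_weight_rev [simp]: "route_weight V x (rev K) = route_weight V x K"
proof (induction V x K rule: route_weight.induct)
  case (3 V x S T K)
  have "route_weight V x ((rev K @ [T]) @ [S])
      = route_weight V x (rev K @ [T]) + xs x (Ebetween V T S) + xs x (Ein V S)"
    by (subst route_weight_append) auto
  then show ?case
    using "3.IH" by (simp add: Ebetween_commute)
qed simp_all

lemma Vplus_simps [simp]:
  "Vplus [] = {}" "Vplus (S # K) = S \<union> Vplus K" "Vplus (A @ B) = Vplus A \<union> Vplus B"
  "Vplus (rev K) = Vplus K"
  by (auto simp: Vplus_def)

definition disjoint_blocks :: "'a set \<Rightarrow> 'a set list \<Rightarrow> bool" where
  "disjoint_blocks Vp K \<longleftrightarrow> (\<forall>S\<in>set K. S \<noteq> {} \<and> S \<subseteq> Vp) \<and> sorted_wrt disjnt K"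

lemma disjoint_blocks_simps [simp]:
  "disjoint_blocks Vp []"
  "disjoint_blocks Vp (S # K) \<longleftrightarrow> S \<noteq> {} \<and> S \<subseteq> Vp \<and> S \<inter> Vplus K = {} \<and> disjoint_blocks Vp K"
  "disjoint_blocks Vp (A @ B) \<longleftrightarrow>
     disjoint_blocks Vp A \<and> disjoint_blocks Vp B \<and> Vplus A \<inter> Vplus B = {}"
  by (auto simp: disjoint_blocks_def sorted_wrt_append disjnt_def Vplus_def)

lemma disjoint_blocks_rev [simp]: "disjoint_blocks Vp (rev K) \<longleftrightarrow> disjoint_blocks Vp K"
  by (simp add: disjoint_blocks_def sorted_wrt_rev disjnt_commute)

lemma disjoint_blocks_prefix: "disjoint_blocks Vp (X @ Y) \<Longrightarrow> disjoint_blocks Vp X"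
  by simp

lemma Vplus_subset: "disjoint_blocks Vp K \<Longrightarrow> Vplus K \<subseteq> Vp"
  by (auto simp: disjoint_blocks_def Vplus_def)

abbreviation no_adjacent_large :: "'a set list \<Rightarrow> bool" where
  "no_adjacent_large K \<equiv> successively (\<lambda>S T. card S \<le> 1 \<or> card T \<le> 1) K"

lemma no_adjacent_large_prefix: "no_adjacent_large (X @ Y) \<Longrightarrow> no_adjacent_large X"
  by (simp add: successively_append_iff)

lemma partial_route_disjoint_blocks: "partial_route Vp H \<Longrightarrow> disjoint_blocks Vp H"
  unfolding partial_route_def disjoint_blocks_def sorted_wrt_iff_nth_less disjnt_def
  by (metis in_set_conv_nth less_irrefl order_less_trans)

lemma partial_route_no_adjacent_large: "partial_route Vp H \<Longrightarrow> no_adjacent_large H"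
  unfolding partial_route_def successively_conv_nth by (meson not_le)

lemma subroute_split:
  assumes "subroute H' H"
  obtains A B where "H = A @ H' @ B" "H' \<noteq> []"
proof -
  obtain i j where ij: "i \<le> j" "j < length H" "H' = drop i (take (Suc j) H)"
    using assms unfolding subroute_def by blast
  have "H = take i (take (Suc j) H) @ H' @ drop (Suc j) H"
    using ij(3) by (metis append.assoc append_take_drop_id)
  moreover have "H' \<noteq> []"
    using ij by simp
  ultimately show thesis
    using that by blast
qed

lemma nth_1_append_hd: "length A = 1 \<Longrightarrow> P \<noteq> [] \<Longrightarrow> (A @ P @ B) ! 1 = hd P"
  by (cases P) (auto simp: length_Suc_conv)

lemma sum_end_positions_le:
  fixes \<sigma> :: "nat \<Rightarrow> real"
  assumes nonpos: "\<And>t. t \<in> {2, n - 1} \<inter> {1..n} \<Longrightarrow> \<sigma> t \<le> 0"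
    and n: "n = a + p + b" "p \<ge> 1" and not_three: "\<not> (a = 1 \<and> p = 1 \<and> b = 1)"
  shows "(\<Sum>t\<in>{2, n - 1} \<inter> {1..n}. \<sigma> t)
      \<le> (if a = 1 then \<sigma> 2 else 0) + (if b = 1 then \<sigma> (n - 1) else 0)"
proof -
  let ?I = "{2, n - 1} \<inter> {1..n}"
  define J where "J = (if a = 1 then {2} else {}) \<union> (if b = 1 then {n - 1} else {})"
  have "J \<subseteq> ?I"
    using n by (auto simp: J_def)
  then have "sum \<sigma> ?I = sum \<sigma> (?I - J) + sum \<sigma> J"
    by (intro sum.subset_diff) auto
  moreover have "sum \<sigma> (?I - J) \<le> 0"
    using nonpos by (intro sum_nonpos) blast
  moreover have "a = 1 \<Longrightarrow> b = 1 \<Longrightarrow> (2::nat) \<noteq> n - 1"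
    using n not_three by linarith
  then have "sum \<sigma> J = (if a = 1 then \<sigma> 2 else 0) + (if b = 1 then \<sigma> (n - 1) else 0)"
    by (simp add: J_def)
  ultimately show ?thesis
    by linarith
qed

definition excess :: "'a set \<Rightarrow> ('a set \<Rightarrow> real) \<Rightarrow> 'a set list \<Rightarrow> real" where
  "excess V x K = route_weight V x K - real (card (Vplus K))"

definition slack :: "'a set \<Rightarrow> ('a set \<Rightarrow> real) \<Rightarrow> 'a set \<Rightarrow> real" where
  "slack V x S = xs x (Ein V S) - real (card S) + 1"

definition attach_excess :: "'a set \<Rightarrow> ('a set \<Rightarrow> real) \<Rightarrow> 'a set list \<Rightarrow> 'a set \<Rightarrow> real" where
  "attach_excess V x A S = route_weight V x (A @ [S]) - xs x (Ein V S) - real (card (Vplus A))"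

lemma slack_singleton [simp]: "slack V x {v} = 0"
  by (simp add: slack_def)

lemma excess_rev [simp]: "excess V x (rev K) = excess V x K"
  by (simp add: excess_def)

lemma excess_append:
  assumes "P \<noteq> []" "finite (Vplus A)" "finite (Vplus P)" "Vplus A \<inter> Vplus P = {}"
  shows "excess V x (A @ P) = attach_excess V x A (hd P) + excess V x P"
proof -
  have "route_weight V x (A @ P)
      = route_weight V x (A @ [hd P]) - xs x (Ein V (hd P)) + route_weight V x P"
  proof (cases "A = []")
    case True
    then show ?thesis
      using assms(1) by (cases P rule: list.exhaust_sel) (auto simp: neq_Nil_conv)
  next
    case False
    then show ?thesis
      using assms(1) by (simp add: route_weight_append)
  qed
  then show ?thesis
    using assms(2-4) by (simp add: excess_def attach_excess_def card_Un_disjoint)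
qed

locale subtour_feasible =
  fixes V Vp :: "'a set" and x :: "'a set \<Rightarrow> real"
  assumes finite_V: "finite V" and Vp_subset: "Vp \<subseteq> V"
    and nonneg: "\<And>e. e \<in> edges V \<Longrightarrow> 0 \<le> x e"
    and degree: "\<And>v. v \<in> Vp \<Longrightarrow> xs x (cut V {v}) = 2"
    and subtour: "\<And>S. S \<noteq> {} \<Longrightarrow> S \<subseteq> Vp \<Longrightarrow> xs x (Ein V S) \<le> real (card S) - 1"
begin

lemma xs_mono: "F \<subseteq> G \<Longrightarrow> G \<subseteq> edges V \<Longrightarrow> xs x F \<le> xs x G"
  unfolding xs_def
  by (rule sum_mono2) (auto intro: finite_subset[OF _ finite_edges[OF finite_V]] nonneg)

lemma xs_union:
  "F \<subseteq> edges V \<Longrightarrow> G \<subseteq> edges V \<Longrightarrow> F \<inter> G = {} \<Longrightarrow> xs x (F \<union> G) = xs x F + xs x G"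
  unfolding xs_def
  by (rule sum.union_disjoint) (auto intro: finite_subset[OF _ finite_edges[OF finite_V]])

lemma Ein_union_ge:
  assumes "S \<inter> U = {}"
  shows "xs x (Ein V S) + xs x (Ebetween V S U) + xs x (Ein V U) \<le> xs x (Ein V (S \<union> U))"
proof -
  have "xs x (Ein V S) + xs x (Ebetween V S U) + xs x (Ein V U)
      = xs x (Ein V S \<union> Ebetween V S U \<union> Ein V U)"
  proof -
    have "Ein V S \<inter> Ebetween V S U = {}" "(Ein V S \<union> Ebetween V S U) \<inter> Ein V U = {}"
      using assms by (auto simp: Ein_def Ebetween_def edges_def)
    moreover have "Ein V S \<subseteq> edges V" "Ebetween V S U \<subseteq> edges V" "Ein V U \<subseteq> edges V"
      by (auto simp: Ein_def Ebetween_def)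
    ultimately show ?thesis
      by (simp add: xs_union)
  qed
  also have "\<dots> \<le> xs x (Ein V (S \<union> U))"
    by (rule xs_mono) (auto simp: Ein_def Ebetween_def)
  finally show ?thesis .
qed

lemma Ebetween_singleton_le_2:
  assumes "v \<in> Vp" "v \<notin> X" "v \<notin> Y" "X \<inter> Y = {}"
  shows "xs x (Ebetween V X {v}) + xs x (Ebetween V {v} Y) \<le> 2"
proof -
  have "xs x (Ebetween V X {v}) + xs x (Ebetween V {v} Y)
      = xs x (Ebetween V X {v} \<union> Ebetween V {v} Y)"
  proof (rule xs_union[symmetric])
    show "Ebetween V X {v} \<inter> Ebetween V {v} Y = {}"
      using assms(2-4) by (auto simp: Ebetween_def edges_def doubleton_eq_iff)
  qed (auto simp: Ebetween_def)
  also have "\<dots> \<le> xs x (cut V {v})"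
    by (rule xs_mono) (auto simp: Ebetween_def cut_def)
  finally show ?thesis
    using degree[OF assms(1)] by simp
qed

lemma route_weight_le_Ein: "disjoint_blocks Vp K \<Longrightarrow> route_weight V x K \<le> xs x (Ein V (Vplus K))"
proof (induction K rule: induct_list012)
  case (3 S T K)
  let ?U = "Vplus (T # K)"
  have "route_weight V x (S # T # K)
      \<le> xs x (Ein V S) + xs x (Ebetween V S ?U) + xs x (Ein V ?U)"
  proof -
    have "xs x (Ebetween V S T) \<le> xs x (Ebetween V S ?U)"
      by (rule xs_mono) (auto simp: Ebetween_def)
    then show ?thesis
      using 3 by simp
  qed
  also have "\<dots> \<le> xs x (Ein V (Vplus (S # T # K)))"
    using Ein_union_ge[of S ?U] "3.prems" by simp
  finally show ?case .
qed simp_all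

lemma excess_le: "disjoint_blocks Vp K \<Longrightarrow> K \<noteq> [] \<Longrightarrow> excess V x K \<le> -1"
  using route_weight_le_Ein[of K] subtour[of "Vplus K"] Vplus_subset[of Vp K]
  by (cases K) (auto simp: excess_def)

lemma finite_Vplus: "disjoint_blocks Vp K \<Longrightarrow> finite (Vplus K)"
  using Vplus_subset finite_subset[OF Vp_subset finite_V] finite_subset by blast

lemma slack_nonpos: "S \<noteq> {} \<Longrightarrow> S \<subseteq> Vp \<Longrightarrow> slack V x S \<le> 0"
  using subtour[of S] by (simp add: slack_def)

lemma attach_excess_le_neg_slack:
  assumes "disjoint_blocks Vp (A @ [S])"
  shows "attach_excess V x A S \<le> - slack V x S"
  using excess_le[OF assms] excess_append[of "[S]" A V x] assms finite_Vplus[of A] finite_Vplus[of "[S]"]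
  by (simp add: excess_def slack_def)

lemma attach_excess_nonpos:
  assumes blocks: "disjoint_blocks Vp (A @ [S])" and small: "no_adjacent_large (A @ [S])"
    and "length A \<noteq> 1"
  shows "attach_excess V x A S \<le> 0"
proof (cases "length A = 0")
  case True
  then show ?thesis by (simp add: attach_excess_def)
next
  case False
  define A0 T where "A0 = butlast A" and "T = last A"
  have A: "A = A0 @ [T]"
    using False by (simp add: A0_def T_def)
  have "length A0 \<noteq> 0"
    using False \<open>length A \<noteq> 1\<close> unfolding A0_def length_butlast by arith
  then have "A0 \<noteq> []"
    by simp
  have "card T \<le> 1 \<or> card S \<le> 1"
    using small by (simp add: A successively_append_iff)
  then consider v where "S = {v}" | v where "T = {v}"
    using blocks finite_Vplus[of "[S]"] finite_Vplus[of "[T]"]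
    by (auto simp: A le_Suc_eq card_1_singleton_iff)
  then show ?thesis
  proof cases
    case 1
    then show ?thesis
      using attach_excess_le_neg_slack[OF blocks] by simp
  next
    case 2
    have v: "v \<in> Vp" "v \<notin> last A0" "v \<notin> S" "last A0 \<inter> S = {}"
      using blocks last_in_set[OF \<open>A0 \<noteq> []\<close>] by (auto simp: A 2 Vplus_def)
    have "route_weight V x (A @ [S]) = route_weight V x A0
        + (xs x (Ebetween V (last A0) {v}) + xs x (Ebetween V {v} S)) + xs x (Ein V S)"
      using route_weight_append[of A0 "[{v}, S]" V x] \<open>A0 \<noteq> []\<close> by (simp add: A 2)
    moreover have "route_weight V x A0 \<le> real (card (Vplus A0)) - 1"
      using excess_le[of A0] blocks \<open>A0 \<noteq> []\<close> by (simp add: A excess_def)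
    moreover have "card (Vplus A) = card (Vplus A0) + 1"
      using blocks finite_Vplus[of A0] by (simp add: A 2 card_insert_if)
    ultimately show ?thesis
      using Ebetween_singleton_le_2[OF v] by (simp add: attach_excess_def)
  qed
qed

lemma attach_excess_prefix_le:
  assumes "disjoint_blocks Vp (A @ P @ B)" "no_adjacent_large (A @ P @ B)" "P \<noteq> []"
  shows "attach_excess V x A (hd P) \<le> - (if length A = 1 then slack V x ((A @ P @ B) ! 1) else 0)"
proof -
  have "A @ P @ B = (A @ [hd P]) @ tl P @ B"
    using assms(3) by simp
  then have "disjoint_blocks Vp (A @ [hd P])" "no_adjacent_large (A @ [hd P])"
    using assms(1,2) by (metis disjoint_blocks_prefix, metis no_adjacent_large_prefix)
  then show ?thesis
    using attach_excess_le_neg_slack attach_excess_nonpos nth_1_append_hd[OF _ assms(3), of A B]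
    by (cases "length A = 1") simp_all
qed

lemma attach_excess_suffix_le:
  assumes "disjoint_blocks Vp (A @ P @ B)" "no_adjacent_large (A @ P @ B)" "P \<noteq> []"
  shows "attach_excess V x (rev B) (last P)
      \<le> - (if length B = 1 then slack V x ((A @ P @ B) ! (length (A @ P @ B) - 2)) else 0)"
proof -
  let ?H = "A @ P @ B"
  have rev_H: "rev ?H = rev B @ rev P @ rev A"
    by simp
  have "disjoint_blocks Vp (rev ?H)"
    using assms(1) by (simp only: disjoint_blocks_rev)
  moreover have "no_adjacent_large (rev ?H)"
    using assms(2) by (subst successively_rev) (simp add: disj_commute)
  moreover have "length B = 1 \<Longrightarrow> rev ?H ! 1 = ?H ! (length ?H - 2)"
    using assms(3) rev_nth[of 1 ?H] by (simp add: numeral_2_eq_2)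
  ultimately show ?thesis
    unfolding rev_H
    using attach_excess_prefix_le[of "rev B" "rev P" "rev A"] assms(3)
    by (cases "length B = 1") (simp_all add: hd_rev)
qed

lemma slack_nth_nonpos: "disjoint_blocks Vp H \<Longrightarrow> i < length H \<Longrightarrow> slack V x (H ! i) \<le> 0"
  by (rule slack_nonpos) (auto simp: disjoint_blocks_def)

lemma excess_split_ends:
  assumes "disjoint_blocks Vp (A @ P @ B)" "P \<noteq> []"
  shows "excess V x (A @ P @ B)
      = attach_excess V x A (hd P) + attach_excess V x (rev B) (last P) + excess V x P"
proof -
  have "excess V x (A @ P @ B) = attach_excess V x A (hd P) + excess V x (P @ B)"
    using assms excess_append[of "P @ B" A] by (simp add: finite_Vplus)
  also have "excess V x (P @ B) = attach_excess V x (rev B) (last P) + excess V x P"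
    using assms excess_append[of "rev P" "rev B"]
    by (simp add: finite_Vplus hd_rev Int_commute flip: excess_rev[of V x "P @ B"])
  finally show ?thesis
    by simp
qed

lemma excess_end_slacks_le:
  assumes blocks: "disjoint_blocks Vp H" and small: "no_adjacent_large H"
    and H: "H = A @ P @ B" and "P \<noteq> []"
  shows "excess V x H + (\<Sum>t\<in>{2, length H - 1} \<inter> {1..length H}. slack V x (H ! (t - 1)))
      \<le> excess V x P"
proof -
  let ?n = "length H" and ?\<sigma> = "\<lambda>t. slack V x (H ! (t - 1))"
  have excess_H: "excess V x H
      = attach_excess V x A (hd P) + attach_excess V x (rev B) (last P) + excess V x P"
    using blocks \<open>P \<noteq> []\<close> unfolding H by (rule excess_split_ends)
  show ?thesis
  proof (cases "length A = 1 \<and> length P = 1 \<and> length B = 1")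
    case True
    \<comment> \<open>The two slack positions of W_OF coincide, so the bound for all of H is needed.\<close>
    then obtain a S b where "A = [a]" "P = [S]" "B = [b]"
      by (auto simp: length_Suc_conv)
    then have "{2, ?n - 1} \<inter> {1..?n} = {2}" and "H ! 1 = S" and "excess V x P = slack V x S - 1"
      by (simp_all add: H excess_def slack_def)
    moreover have "excess V x H \<le> -1"
      using blocks excess_le \<open>P \<noteq> []\<close> by (simp add: H)
    ultimately show ?thesis
      by simp
  next
    case False
    have L: "attach_excess V x A (hd P) \<le> - (if length A = 1 then ?\<sigma> 2 else 0)"
      using attach_excess_prefix_le[OF blocks[unfolded H] small[unfolded H] \<open>P \<noteq> []\<close>]
      by (cases "length A = 1") (simp_all add: H)
    have R: "attach_excess V x (rev B) (last P) \<le> - (if length B = 1 then ?\<sigma> (?n - 1) else 0)"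
      using attach_excess_suffix_le[OF blocks[unfolded H] small[unfolded H] \<open>P \<noteq> []\<close>]
      by (cases "length B = 1") (simp_all add: H)
    have "?\<sigma> t \<le> 0" if "t \<in> {2, ?n - 1} \<inter> {1..?n}" for t
      using that blocks by (intro slack_nth_nonpos) auto
    then have "sum ?\<sigma> ({2, ?n - 1} \<inter> {1..?n})
        \<le> (if length A = 1 then ?\<sigma> 2 else 0) + (if length B = 1 then ?\<sigma> (?n - 1) else 0)"
      using False \<open>P \<noteq> []\<close>
      by (intro sum_end_positions_le[where p = "length P"]) (simp_all add: H Suc_le_eq)
    then show ?thesis
      using excess_H L R by linarith
  qed
qed

end

theorem lemma9:
  fixes depot :: 'a and Vp :: "'a set" and k :: nat and C :: real
    and Xi :: "'b set" and p :: "'b \<Rightarrow> real" and d :: "'b \<Rightarrow> 'a \<Rightarrow> real"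
    and H H' :: "'a set list" and x :: "'a set \<Rightarrow> real"
  assumes "finite Vp" and "depot \<notin> Vp"
    and "C > 0"
    and "finite Xi" and "\<forall>\<xi>\<in>Xi. p \<xi> \<ge> 0" and "(\<Sum>\<xi>\<in>Xi. p \<xi>) = 1"
    and "\<forall>\<xi>\<in>Xi. \<forall>i\<in>Vp. d \<xi> i \<in> \<rat> \<and> d \<xi> i \<ge> 0"
    and "partial_route Vp H"
    and "subroute H' H"
    and "x \<in> Xsub depot Vp \<or> x \<in> Xcvrp depot Vp k C (dbar Xi p d)"
  shows "xroute (insert depot Vp) x H' - real (card (Vplus H')) + 1
           \<ge> W_OF (insert depot Vp) x H - 1"
proof -
  have "x \<in> Xsub depot Vp"
    using assms(10) by (auto simp: Xcvrp_def)
  then interpret subtour_feasible "insert depot Vp" Vp x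
    using assms(1) by unfold_locales (auto simp: Xsub_def)
  obtain A B where "H = A @ H' @ B" "H' \<noteq> []"
    using assms(9) by (rule subroute_split)
  then have "excess (insert depot Vp) x H
      + (\<Sum>t\<in>{2, length H - 1} \<inter> {1..length H}. slack (insert depot Vp) x (H ! (t - 1)))
      \<le> excess (insert depot Vp) x H'"
    using assms(8) partial_route_disjoint_blocks partial_route_no_adjacent_large
    by (blast intro: excess_end_slacks_le)
  then show ?thesis
    by (simp add: W_OF_def xroute_eq_route_weight excess_def slack_def)
qed

end
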